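(* Let $\alpha_a$ be a labeled dGL hybrid game, $\varphi$ a dGL formula, and $S$ an inductive Angelic subvalue map for $\alpha_a$ with $\models S(\mathsf{end})\rightarrow\varphi$. Then for every subgame label $b\in\mathrm{nodes}(\alpha_a)$, every state satisfying $S(a)$ satisfies $$\big\langle \mathrm{prefix}_b(\mathcal{U}(\alpha_a,S))\big\rangle\,\big\langle \mathrm{suffix}_b(\mathcal{P}(\alpha_a,S))\big\rangle\,\varphi .$$
   Context: Differential game logic (dGL). Hybrid games are generated by $\alpha,\beta ::= x:=e \mid \alpha;\beta \mid ?Q \mid \{x'=f(x)\,\&\,Q\} \mid \alpha^{*} \mid \alpha\cup\beta \mid x:=* \mid\ !Q \mid \{x'=f(x)\,\&\,Q\}^{d} \mid \alpha^{\times} \mid \alpha\cap\beta \mid x:=\otimes$, with $x$ a real variable (vector for ODEs), $e,f(x)$ polynomial terms, $Q$ a formula. Players Angel and Demon: $x:=e$ deterministic assignment; in $x:=*$ Angel (in $x:=\otimes$ Demon) assigns any real to $x$; in $\{x'=f(x)\&Q\}$ Angel (in $\{x'=f(x)\&Q\}^d$ Demon) chooses a duration $r\ge 0$ of following the ODE with $Q$ true throughout; $?Q$ makes Angel lose and $!Q$ makes Demon lose if $Q$ is false (no effect otherwise); in $\alpha\cup\beta$ Angel (in $\alpha\cap\beta$ Demon) chooses the branch; in $\alpha^*$ Angel (in $\alpha^\times$ Demon) decides before each iteration whether to repeat $\alpha$ or stop; $\alpha;\beta$ is sequential composition. $\mathrm{skip}$ denotes $?\mathit{true}$. Formulas: polynomial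 (in)equalities closed under connectives, real quantifiers, and modalities $\langle\alpha\rangle\varphi$ (Angel has a winning strategy in $\alpha$ to reach $\varphi$ whatever Demon does) and $[\alpha]\varphi\equiv\neg\langle\alpha\rangle\neg\varphi$, with the standard dGL semantics: $\langle x:=e\rangle\varphi\leftrightarrow\varphi(x\mapsto e)$, $\langle x:=*\rangle\varphi\leftrightarrow\exists x\varphi$, $\langle x:=\otimes\rangle\varphi\leftrightarrow\forall x\varphi$, $\langle ?Q\rangle\varphi\leftrightarrow Q\wedge\varphi$, $\langle !Q\rangle\varphi\leftrightarrow(Q\rightarrow\varphi)$, $\langle\alpha\cup\beta\rangle\varphi\leftrightarrow\langle\alpha\rangle\varphi\vee\langle\beta\rangle\varphi$, $\langle\alpha\cap\beta\rangle\varphi\leftrightarrow\langle\alpha\rangle\varphi\wedge\langle\beta\rangle\varphi$, $\langle\alpha;\beta\rangle\varphi\leftrightarrow\langle\alpha\rangle\langle\beta\rangle\varphi$; the Angel ODE holds iff some solution of some duration $r\ge0$ staying in $Q$ ends in $\varphi$, the Demon ODE iff all such solutions end in $\varphi$; $\langle\alpha^*\rangle\varphi$ denotes the least set $Z$ of states with $[\![\varphi]\!]\cup\varsigma_\alpha(Z)\subseteq Z$ and $\langle\alpha^\times\rangle\varphi$ the greatest $Z$ with $Z\subseteq[\![\varphi]\!]\cap\varsigma_\alpha(Z)$, where $\varsigma_\alpha(Z)$ is Angel's winning region in $\alpha$ for goal $Z$. $\models\psi$ means $\psi$ is valid. Labels. Every node of the syntax tree of a game carries a unique label. $\alpha_a$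 is a game whose root has label $a$; $\mathrm{nodes}(\alpha_a)$ is the set of labels of its subgames (including $a$). A special label $\mathsf{end}\notin\mathrm{nodes}(\alpha_a)$ is used. A map $S$ assigns formulas to a set of labels containing $\mathrm{nodes}(\alpha_a)\cup\{\mathsf{end}\}$; $S\{\mathsf{end}\mapsto Q\}$ is $S$ with the value at $\mathsf{end}$ replaced by $Q$. Below $\gamma_g,\delta_d$ denote immediate subgames with root labels $g,d$. Game suffix $\mathrm{suffix}_b(\alpha_a)$ for a label $b$ of a subgame: if $b=a$, it is $\alpha_a$. Otherwise: for $\alpha_a=((\gamma_g)^* )_a$ or $((\gamma_g)^\times)_a$ it is $\mathrm{suffix}_b(\gamma_g);\alpha_a$; for $(\gamma_g\cup\delta_d)_a$ or $(\gamma_g\cap\delta_d)_a$ it is the suffix within the branch containing $b$; for $(\gamma_g;\delta_d)_a$ it is $\mathrm{suffix}_b(\gamma_g);\delta_d$ if $b\in\mathrm{nodes}(\gamma_g)$ and $\mathrm{suffix}_b(\delta_d)$ otherwise. Game prefix $\mathrm{prefix}_b(\alpha_a)$: if $b=a$ and $\alpha$ is not a loop, it is $\mathrm{skip}$; if $b=a$ and $\alpha$ is a loop, it is $\alpha_a$. Otherwise: for loops $((\gamma_g)^* )_a,((\gamma_g)^\times)_a$ it is $\alpha_a;\mathrm{prefix}_b(\gamma_g)$; for $\cup,\cap$ the prefix within the branch containing $b$; for $(\gamma_g;\delta_d)_a$ it is $\mathrm{prefix}_b(\gamma_g)$ if $b\in\mathrm{nodes}(\gamma_g)$ and $\gamma_g;\mathrm{prefix}_b(\delta_d)$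 otherwise. Existential projection $\mathcal{P}(\alpha_a,S)$: $(x:=* )_a\mapsto(x:=* )_a;?S(\mathsf{end})$; $\{x'=f(x)\&Q\}_a\mapsto\{x'=f(x)\&Q\}_a;?S(\mathsf{end})$; $(\gamma_g\cup\delta_d)_a\mapsto(?S(g);\mathcal{P}(\gamma_g,S))\cup_a(?S(d);\mathcal{P}(\delta_d,S))$; $((\gamma_g)^* )_a\mapsto\big((?S(g);\mathcal{P}(\gamma_g,S\{\mathsf{end}\mapsto S(a)\}))^*\big)_a;?S(\mathsf{end})$; $(\gamma_g;\delta_d)_a\mapsto\mathcal{P}(\gamma_g,S\{\mathsf{end}\mapsto S(d)\});_a\mathcal{P}(\delta_d,S)$; $(\gamma_g\cap\delta_d)_a\mapsto\mathcal{P}(\gamma_g,S)\cap_a\mathcal{P}(\delta_d,S)$; $((\gamma_g)^\times)_a\mapsto(\mathcal{P}(\gamma_g,S\{\mathsf{end}\mapsto S(a)\})^\times)_a$; $x:=e,x:=\otimes,?Q,!Q,\{x'=f(x)\&Q\}^d$ unchanged. The node replacing the node labeled $a$ keeps label $a$, subgames keep their labels, new nodes get fresh labels. Universal projection $\mathcal{U}(\alpha_a,S)$: $(x:=* )_a\mapsto (x:=\otimes)_a;\,!S(\mathsf{end})$; $\{x'=f(x)\&Q\}_a\mapsto(\{x'=f(x)\&Q\}^d)_a;\,!S(\mathsf{end})$; $(\gamma_g\cup\delta_d)_a\mapsto(!S(g);\mathcal{U}(\gamma_g,S))\cap_a(!S(d);\mathcal{U}(\delta_d,S))$; $((\gamma_g)^*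 )_a\mapsto\big((!S(g);\mathcal{U}(\gamma_g,S\{\mathsf{end}\mapsto S(a)\}))^{\times}\big)_a;\,!S(\mathsf{end})$; $(\gamma_g;\delta_d)_a\mapsto\mathcal{U}(\gamma_g,S\{\mathsf{end}\mapsto S(d)\});_a\mathcal{U}(\delta_d,S)$; $(\gamma_g\cap\delta_d)_a\mapsto\mathcal{U}(\gamma_g,S)\cap_a\mathcal{U}(\delta_d,S)$; $((\gamma_g)^\times)_a\mapsto(\mathcal{U}(\gamma_g,S\{\mathsf{end}\mapsto S(a)\})^\times)_a$; $x:=e,x:=\otimes,?Q,!Q,\{x'=f(x)\&Q\}^d$ unchanged. The node replacing the node labeled $a$ (the Demon counterpart, $\cap$, or $^\times$) keeps label $a$, subgames keep labels, new nodes get fresh labels. Inductive Angelic subvalue map: $S$ is one for $\alpha_a$ (written $S\Vdash\alpha_a$) when recursively: if $\alpha$ is atomic ($x:=e,x:=*,x:=\otimes,?Q,!Q$, an Angel or Demon ODE) then $\models S(a)\rightarrow\langle\alpha\rangle S(\mathsf{end})$; if $(\gamma_g\cup\delta_d)_a$ then $\models S(a)\rightarrow S(g)\vee S(d)$, $S\Vdash\gamma_g$, $S\Vdash\delta_d$; if $(\gamma_g\cap\delta_d)_a$ then $\models S(a)\rightarrow S(g)\wedge S(d)$, $S\Vdash\gamma_g$, $S\Vdash\delta_d$; if $(\gamma_g;\delta_d)_a$ then $\models S(a)\rightarrow S(g)$, $S\{\mathsf{end}\mapsto S(d)\}\Vdash\gamma_g$, $S\Vdash\delta_d$; if $((\gamma_g)^*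 )_a$ then $\models S(a)\rightarrow\langle\mathcal{P}(\alpha_a,S)\rangle S(\mathsf{end})$ and $S\{\mathsf{end}\mapsto S(a)\}\Vdash\gamma_g$; if $((\gamma_g)^\times)_a$ then $\models S(a)\rightarrow S(g)\wedge S(\mathsf{end})$ and $S\{\mathsf{end}\mapsto S(a)\}\Vdash\gamma_g$. *)

theory Defs
  imports Complex_Main
begin

type_synonym var = nat
type_synonym state = "var \<Rightarrow> real"

text \<open>Original nodes carry labels \<open>Lbl n\<close>; the special label \<open>End\<close>
  is the label end; \<open>Fresh\<close> is the (reserved) label given to all new nodes
  created by projections / prefix / suffix constructions.\<close>
datatype label = Lbl nat | End | Fresh

datatype trm = Var var | Const rat | Neg trm | Plus trm trm | Times trm trm

primrec teval :: "trm \<Rightarrow> state \<Rightarrow> real" where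
  "teval (Var x) \<omega> = \<omega> x"
| "teval (Const c) \<omega> = of_rat c"
| "teval (Neg t) \<omega> = - teval t \<omega>"
| "teval (Plus s t) \<omega> = teval s \<omega> + teval t \<omega>"
| "teval (Times s t) \<omega> = teval s \<omega> * teval t \<omega>"

type_synonym ode = "(var \<times> trm) list"

datatype fml =
    TT
  | Geq trm trm
  | Gt trm trm
  | Eq trm trm
  | Not fml
  | And fml fml
  | Or fml fml
  | Imp fml fml
  | Iff fml fml
  | Exists var fml
  | Forall var fml
  | Dia game fml
  | Box game fml
and game =
    Assign label var trm
  | AssignAny label var
  | AssignDem label var
  | Test label fml
  | DTest label fml               (* !Q *)
  | ODE label ode fml
  | DODE label ode fml
  | Loop label game
  | DLoop label game
  | Choice label game game
  | DChoice label game game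
  | Seq label game game

definition ode_sol :: "ode \<Rightarrow> state set \<Rightarrow> state \<Rightarrow> real \<Rightarrow> (real \<Rightarrow> state) \<Rightarrow> bool" where
  "ode_sol f Q \<omega> r sol \<longleftrightarrow>
     0 \<le> r \<and> sol 0 = \<omega> \<and>
     (\<forall>t\<in>{0..r}. sol t \<in> Q) \<and>
     (\<forall>t\<in>{0..r}. \<forall>(x,e)\<in>set f.
         ((\<lambda>\<tau>. sol \<tau> x) has_real_derivative teval e (sol t)) (at t within {0..r})) \<and>
     (\<forall>t\<in>{0..r}. \<forall>y. y \<notin> fst ` set f \<longrightarrow> sol t y = \<omega> y)"

primrec fsem :: "fml \<Rightarrow> state set" and win :: "game \<Rightarrow> state set \<Rightarrow> state set" where
  "fsem TT = UNIV"
| "fsem (Geq s t) = {\<omega>. teval s \<omega> \<ge> teval t \<omega>}"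
| "fsem (Gt s t) = {\<omega>. teval s \<omega> > teval t \<omega>}"
| "fsem (Eq s t) = {\<omega>. teval s \<omega> = teval t \<omega>}"
| "fsem (Not p) = - fsem p"
| "fsem (And p q) = fsem p \<inter> fsem q"
| "fsem (Or p q) = fsem p \<union> fsem q"
| "fsem (Imp p q) = - fsem p \<union> fsem q"
| "fsem (Iff p q) = {\<omega>. \<omega> \<in> fsem p \<longleftrightarrow> \<omega> \<in> fsem q}"
| "fsem (Exists x p) = {\<omega>. \<exists>v. \<omega>(x := v) \<in> fsem p}"
| "fsem (Forall x p) = {\<omega>. \<forall>v. \<omega>(x := v) \<in> fsem p}"
| "fsem (Dia g p) = win g (fsem p)"
| "fsem (Box g p) = - win g (- fsem p)"
| "win (Assign a x e) X = {\<omega>. \<omega>(x := teval e \<omega>) \<in> X}"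
| "win (AssignAny a x) X = {\<omega>. \<exists>v. \<omega>(x := v) \<in> X}"
| "win (AssignDem a x) X = {\<omega>. \<forall>v. \<omega>(x := v) \<in> X}"
| "win (Test a q) X = fsem q \<inter> X"
| "win (DTest a q) X = - fsem q \<union> X"
| "win (ODE a f q) X = {\<omega>. \<exists>r sol. ode_sol f (fsem q) \<omega> r sol \<and> sol r \<in> X}"
| "win (DODE a f q) X = {\<omega>. \<forall>r sol. ode_sol f (fsem q) \<omega> r sol \<longrightarrow> sol r \<in> X}"
| "win (Loop a g) X = lfp (\<lambda>Z. X \<union> win g Z)"
| "win (DLoop a g) X = gfp (\<lambda>Z. X \<inter> win g Z)"
| "win (Choice a g d) X = win g X \<union> win d X"
| "win (DChoice a g d) X = win g X \<inter> win d X"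
| "win (Seq a g d) X = win g (win d X)"

definition valid :: "fml \<Rightarrow> bool" where
  "valid p \<longleftrightarrow> fsem p = UNIV"

primrec lab :: "game \<Rightarrow> label" where
  "lab (Assign a x e) = a"
| "lab (AssignAny a x) = a"
| "lab (AssignDem a x) = a"
| "lab (Test a q) = a"
| "lab (DTest a q) = a"
| "lab (ODE a f q) = a"
| "lab (DODE a f q) = a"
| "lab (Loop a g) = a"
| "lab (DLoop a g) = a"
| "lab (Choice a g d) = a"
| "lab (DChoice a g d) = a"
| "lab (Seq a g d) = a"

primrec labels :: "game \<Rightarrow> label list" where
  "labels (Assign a x e) = [a]"
| "labels (AssignAny a x) = [a]"
| "labels (AssignDem a x) = [a]"
| "labels (Test a q) = [a]"
| "labels (DTest a q) = [a]"
| "labels (ODE a f q) = [a]"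
| "labels (DODE a f q) = [a]"
| "labels (Loop a g) = a # labels g"
| "labels (DLoop a g) = a # labels g"
| "labels (Choice a g d) = a # labels g @ labels d"
| "labels (DChoice a g d) = a # labels g @ labels d"
| "labels (Seq a g d) = a # labels g @ labels d"

definition nodes :: "game \<Rightarrow> label set" where
  "nodes g = set (labels g)"

definition skip :: game where
  "skip = Test Fresh TT"

fun suffix :: "label \<Rightarrow> game \<Rightarrow> game" where
  "suffix b (Loop a g) = (if b = a then Loop a g else Seq Fresh (suffix b g) (Loop a g))"
| "suffix b (DLoop a g) = (if b = a then DLoop a g else Seq Fresh (suffix b g) (DLoop a g))"
| "suffix b (Choice a g d) =
     (if b = a then Choice a g d else if b \<in> nodes g then suffix b g else suffix b d)"
| "suffix b (DChoice a g d) =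
     (if b = a then DChoice a g d else if b \<in> nodes g then suffix b g else suffix b d)"
| "suffix b (Seq a g d) =
     (if b = a then Seq a g d else if b \<in> nodes g then Seq Fresh (suffix b g) d else suffix b d)"
| "suffix b g = g"  (* atomic games: only b = lab g is meaningful *)

fun prefix :: "label \<Rightarrow> game \<Rightarrow> game" where
  "prefix b (Loop a g) = (if b = a then Loop a g else Seq Fresh (Loop a g) (prefix b g))"
| "prefix b (DLoop a g) = (if b = a then DLoop a g else Seq Fresh (DLoop a g) (prefix b g))"
| "prefix b (Choice a g d) =
     (if b = a then skip else if b \<in> nodes g then prefix b g else prefix b d)"
| "prefix b (DChoice a g d) =
     (if b = a then skip else if b \<in> nodes g then prefix b g else prefix b d)"
| "prefix b (Seq a g d) =
     (if b = a then skip else if b \<in> nodes g then prefix b g else Seq Fresh g (prefix b d))"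
| "prefix b g = skip"  (* atomic games: only b = lab g is meaningful *)

fun projP :: "game \<Rightarrow> (label \<Rightarrow> fml) \<Rightarrow> game" where
  "projP (AssignAny a x) S = Seq Fresh (AssignAny a x) (Test Fresh (S End))"
| "projP (ODE a f q) S = Seq Fresh (ODE a f q) (Test Fresh (S End))"
| "projP (Choice a g d) S =
     Choice a (Seq Fresh (Test Fresh (S (lab g))) (projP g S))
              (Seq Fresh (Test Fresh (S (lab d))) (projP d S))"
| "projP (Loop a g) S =
     Seq Fresh (Loop a (Seq Fresh (Test Fresh (S (lab g))) (projP g (S(End := S a)))))
               (Test Fresh (S End))"
| "projP (Seq a g d) S = Seq a (projP g (S(End := S (lab d)))) (projP d S)"
| "projP (DChoice a g d) S = DChoice a (projP g S) (projP d S)"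
| "projP (DLoop a g) S = DLoop a (projP g (S(End := S a)))"
| "projP g S = g"

fun projU :: "game \<Rightarrow> (label \<Rightarrow> fml) \<Rightarrow> game" where
  "projU (AssignAny a x) S = Seq Fresh (AssignDem a x) (DTest Fresh (S End))"
| "projU (ODE a f q) S = Seq Fresh (DODE a f q) (DTest Fresh (S End))"
| "projU (Choice a g d) S =
     DChoice a (Seq Fresh (DTest Fresh (S (lab g))) (projU g S))
               (Seq Fresh (DTest Fresh (S (lab d))) (projU d S))"
| "projU (Loop a g) S =
     Seq Fresh (DLoop a (Seq Fresh (DTest Fresh (S (lab g))) (projU g (S(End := S a)))))
               (DTest Fresh (S End))"
| "projU (Seq a g d) S = Seq a (projU g (S(End := S (lab d)))) (projU d S)"
| "projU (DChoice a g d) S = DChoice a (projU g S) (projU d S)"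
| "projU (DLoop a g) S = DLoop a (projU g (S(End := S a)))"
| "projU g S = g"

fun subval :: "(label \<Rightarrow> fml) \<Rightarrow> game \<Rightarrow> bool" where
  "subval S (Choice a g d) \<longleftrightarrow>
     valid (Imp (S a) (Or (S (lab g)) (S (lab d)))) \<and> subval S g \<and> subval S d"
| "subval S (DChoice a g d) \<longleftrightarrow>
     valid (Imp (S a) (And (S (lab g)) (S (lab d)))) \<and> subval S g \<and> subval S d"
| "subval S (Seq a g d) \<longleftrightarrow>
     valid (Imp (S a) (S (lab g))) \<and> subval (S(End := S (lab d))) g \<and> subval S d"
| "subval S (Loop a g) \<longleftrightarrow>
     valid (Imp (S a) (Dia (projP (Loop a g) S) (S End))) \<and> subval (S(End := S a)) g"
| "subval S (DLoop a g) \<longleftrightarrow>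
     valid (Imp (S a) (And (S (lab g)) (S End))) \<and> subval (S(End := S a)) g"
| "subval S g \<longleftrightarrow> valid (Imp (S (lab g)) (Dia g (S End)))"

end

theory Submission
  imports Defs
begin

text \<open>An inductive subvalue map \<open>S\<close> annotates every node of \<open>\<alpha>\<close> with a formula from which
  Angel can win the rest of the game into \<open>S End\<close>. The existential projection fixes Angel's
  choices so that they follow \<open>S\<close>; hence its suffix from any node \<open>b\<close> wins from \<open>S b\<close> into
  \<open>S End\<close>. The universal projection hands Angel's choices to Demon but penalises him (via \<open>!\<close>)
  whenever he leaves the states annotated by \<open>S\<close>; hence its prefix up to \<open>b\<close> wins from
  \<open>S (lab \<alpha>)\<close> into \<open>S b\<close>. Both halves are proved by induction along \<open>subval\<close>, Demon loops
  by coinduction with the annotation of the loop as invariant, and they compose at \<open>S b\<close>.\<close>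

lemma valid_Imp_iff [simp]: "valid (Imp p q) \<longleftrightarrow> fsem p \<subseteq> fsem q"
  by (auto simp: valid_def)

lemma win_mono: "X \<subseteq> Y \<Longrightarrow> win g X \<subseteq> win g Y"
proof (induction g arbitrary: X Y)
  case (Loop a g)
  then show ?case by (simp, intro lfp_mono) blast
next
  case (DLoop a g)
  then show ?case by (simp, intro gfp_mono) blast
qed (simp; blast)+

lemma win_skip [simp]: "win skip X = X"
  by (simp add: skip_def)

lemma nodes_simps [simp]:
  "nodes (Assign a x e) = {a}" "nodes (AssignAny a x) = {a}" "nodes (AssignDem a x) = {a}"
  "nodes (Test a q) = {a}" "nodes (DTest a q) = {a}" "nodes (ODE a f q) = {a}"
  "nodes (DODE a f q) = {a}" "nodes (Loop a g) = insert a (nodes g)"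
  "nodes (DLoop a g) = insert a (nodes g)"
  "nodes (Choice a g d) = insert a (nodes g \<union> nodes d)"
  "nodes (DChoice a g d) = insert a (nodes g \<union> nodes d)"
  "nodes (Seq a g d) = insert a (nodes g \<union> nodes d)"
  by (auto simp: nodes_def)

lemma lab_in_nodes [simp]: "lab g \<in> nodes g"
  by (cases g) auto

text \<open>Keep updated maps \<open>S(End := p)\<close> folded, so that induction hypotheses about them match
  the goals syntactically.\<close>
declare fun_upd_apply [simp del] fun_upd_same [simp]

lemma fun_upd_End_node [simp]: "End \<notin> nodes g \<Longrightarrow> b \<in> nodes g \<Longrightarrow> (S(End := p)) b = S b"
  by (metis fun_upd_other)

lemma nodes_projP [simp]: "b \<noteq> Fresh \<Longrightarrow> b \<in> nodes (projP g S) \<longleftrightarrow> b \<in> nodes g"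
  by (induction g S rule: projP.induct) auto

lemma nodes_projU [simp]: "b \<noteq> Fresh \<Longrightarrow> b \<in> nodes (projU g S) \<longleftrightarrow> b \<in> nodes g"
  by (induction g S rule: projU.induct) auto

lemma win_DLoop_coinduct: "Z \<subseteq> X \<Longrightarrow> Z \<subseteq> win g Z \<Longrightarrow> Z \<subseteq> win (DLoop a g) X"
  by (simp add: gfp_upperbound)

lemma subval_win_projP:
  assumes "subval S \<alpha>" and "End \<notin> nodes \<alpha>"
  shows "fsem (S (lab \<alpha>)) \<subseteq> win (projP \<alpha> S) (fsem (S End))"
  using assms
proof (induction S \<alpha> rule: subval.induct)
  case (3 S a g d)
  have "fsem (S a) \<subseteq> fsem (S (lab g))"
    using "3.prems" by simp
  also have "\<dots> \<subseteq> win (projP g (S(End := S (lab d)))) (fsem (S (lab d)))"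
    using "3.IH"(1) "3.prems" by simp
  also have "\<dots> \<subseteq> win (projP g (S(End := S (lab d)))) (win (projP d S) (fsem (S End)))"
    using "3.IH"(2) "3.prems" by (intro win_mono) simp
  finally show ?case by simp
next
  case (5 S a g)
  have "fsem (S (lab g)) \<subseteq> win (projP g (S(End := S a))) (fsem (S a))"
    using "5.IH" "5.prems" by simp
  then have "fsem (S a) \<subseteq> win (DLoop a (projP g (S(End := S a)))) (fsem (S End))"
    using "5.prems" by (intro win_DLoop_coinduct) auto
  then show ?case
    by simp
qed auto

lemma subval_win_projU:
  assumes "subval S \<alpha>" and "End \<notin> nodes \<alpha>"
  shows "fsem (S (lab \<alpha>)) \<subseteq> win (projU \<alpha> S) (fsem (S End))"
  using assms
proof (induction S \<alpha> rule: subval.induct)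
  case (3 S a g d)
  have "fsem (S a) \<subseteq> fsem (S (lab g))"
    using "3.prems" by simp
  also have "\<dots> \<subseteq> win (projU g (S(End := S (lab d)))) (fsem (S (lab d)))"
    using "3.IH"(1) "3.prems" by simp
  also have "\<dots> \<subseteq> win (projU g (S(End := S (lab d)))) (win (projU d S) (fsem (S End)))"
    using "3.IH"(2) "3.prems" by (intro win_mono) simp
  finally show ?case by simp
next
  case (4 S a g)
  \<comment> \<open>The trailing \<open>!S End\<close> makes the target trivial, so the Demon loop wins from everywhere.\<close>
  let ?G = "projU g (S(End := S a))"
  have "fsem (S (lab g)) \<subseteq> win ?G (fsem (S a))"
    using "4.IH" "4.prems" by simp
  also have "\<dots> \<subseteq> win ?G UNIV"
    by (intro win_mono) simp
  finally have "UNIV \<subseteq> win (DLoop a (Seq Fresh (DTest Fresh (S (lab g))) ?G)) UNIV"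
    by (intro win_DLoop_coinduct) auto
  then show ?case
    by auto
next
  case (5 S a g)
  have "fsem (S (lab g)) \<subseteq> win (projU g (S(End := S a))) (fsem (S a))"
    using "5.IH" "5.prems" by simp
  then have "fsem (S a) \<subseteq> win (DLoop a (projU g (S(End := S a)))) (fsem (S End))"
    using "5.prems" by (intro win_DLoop_coinduct) auto
  then show ?case
    by simp
qed auto

lemma subval_win_suffix_projP:
  assumes "subval S \<alpha>" and "End \<notin> nodes \<alpha>" and "b \<in> nodes \<alpha>" and "b \<noteq> Fresh"
  shows "fsem (S b) \<subseteq> win (suffix b (projP \<alpha> S)) (fsem (S End))"
  using assms
proof (induction S \<alpha> rule: subval.induct)
  case (1 S a g d)
  then show ?case
    using subval_win_projP[OF "1.prems"(1,2)] by auto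
next
  case (2 S a g d)
  then show ?case
    using subval_win_projP[OF "2.prems"(1,2)] by auto
next
  case (3 S a g d)
  let ?S = "S(End := S (lab d))"
  have "fsem (S b) \<subseteq> win (suffix b (projP g ?S)) (win (projP d S) (fsem (S End)))"
    if "b \<in> nodes g"
  proof -
    have "fsem (S b) \<subseteq> win (suffix b (projP g ?S)) (fsem (S (lab d)))"
      using "3.IH"(1) "3.prems" that by auto
    also have "\<dots> \<subseteq> win (suffix b (projP g ?S)) (win (projP d S) (fsem (S End)))"
      using subval_win_projP "3.prems" by (intro win_mono) auto
    finally show ?thesis .
  qed
  then show ?case
    using "3.IH"(2) "3.prems" subval_win_projP[OF "3.prems"(1,2)] by auto
next
  case (4 S a g)
  let ?S = "S(End := S a)"
  have root: "fsem (S a) \<subseteq> win (projP (Loop a g) S) (fsem (S End))"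
    using subval_win_projP[OF "4.prems"(1,2)] by simp
  have "fsem (S b) \<subseteq> win (suffix b (projP g ?S)) (win (projP (Loop a g) S) (fsem (S End)))"
    if "b \<in> nodes g"
  proof -
    have "fsem (S b) \<subseteq> win (suffix b (projP g ?S)) (fsem (S a))"
      using "4.IH" "4.prems" that by auto
    also have "\<dots> \<subseteq> win (suffix b (projP g ?S)) (win (projP (Loop a g) S) (fsem (S End)))"
      using root by (rule win_mono)
    finally show ?thesis .
  qed
  then show ?case
    using "4.prems" root by auto
next
  case (5 S a g)
  let ?S = "S(End := S a)"
  have root: "fsem (S a) \<subseteq> win (projP (DLoop a g) S) (fsem (S End))"
    using subval_win_projP[OF "5.prems"(1,2)] by simp
  have "fsem (S b) \<subseteq> win (suffix b (projP g ?S)) (win (projP (DLoop a g) S) (fsem (S End)))"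
    if "b \<in> nodes g"
  proof -
    have "fsem (S b) \<subseteq> win (suffix b (projP g ?S)) (fsem (S a))"
      using "5.IH" "5.prems" that by auto
    also have "\<dots> \<subseteq> win (suffix b (projP g ?S)) (win (projP (DLoop a g) S) (fsem (S End)))"
      using root by (rule win_mono)
    finally show ?thesis .
  qed
  then show ?case
    using "5.prems" root by auto
qed auto

lemma subval_win_prefix_projU:
  assumes "subval S \<alpha>" and "End \<notin> nodes \<alpha>" and "b \<in> nodes \<alpha>" and "b \<noteq> Fresh"
  shows "fsem (S (lab \<alpha>)) \<subseteq> win (prefix b (projU \<alpha> S)) (fsem (S b))"
  using assms
proof (induction S \<alpha> rule: subval.induct)
  case (3 S a g d)
  let ?S = "S(End := S (lab d))"
  have "fsem (S (lab g)) \<subseteq> win (projU g ?S) (win (prefix b (projU d S)) (fsem (S b)))"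
    if "b \<in> nodes d"
  proof -
    have "fsem (S (lab g)) \<subseteq> win (projU g ?S) (fsem (S (lab d)))"
      using subval_win_projU[of ?S g] "3.prems" by auto
    also have "\<dots> \<subseteq> win (projU g ?S) (win (prefix b (projU d S)) (fsem (S b)))"
      using "3.IH"(2) "3.prems" that by (intro win_mono) auto
    finally show ?thesis .
  qed
  then show ?case
    using "3.IH"(1) "3.prems" by auto
next
  case (4 S a g)
  let ?H = "Seq Fresh (DTest Fresh (S (lab g))) (projU g (S(End := S a)))"
  have "fsem (S a) \<subseteq> win ?H (fsem (S a))"
    using subval_win_projU[of "S(End := S a)" g] "4.prems" by auto
  then have loop: "fsem (S a) \<subseteq> win (DLoop a ?H) X" if "fsem (S a) \<subseteq> X" for X
    using that by (intro win_DLoop_coinduct)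
  show ?case
  proof (cases "b = a")
    case True
    then show ?thesis
      using loop[of "fsem (S a)"] by simp
  next
    case False
    then have "fsem (S a) \<subseteq> win (prefix b ?H) (fsem (S b))"
      using "4.IH" "4.prems" by auto
    then show ?thesis
      using False loop "4.prems" by simp
  qed
next
  case (5 S a g)
  let ?G = "projU g (S(End := S a))"
  have "fsem (S a) \<subseteq> win ?G (fsem (S a))"
    using subval_win_projU[of "S(End := S a)" g] "5.prems" by auto
  then have loop: "fsem (S a) \<subseteq> win (DLoop a ?G) X" if "fsem (S a) \<subseteq> X" for X
    using that by (intro win_DLoop_coinduct)
  show ?case
  proof (cases "b = a")
    case True
    then show ?thesis
      using loop[of "fsem (S a)"] by simp
  next
    case False
    then have "fsem (S a) \<subseteq> win (prefix b ?G) (fsem (S b))"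
      using "5.IH" "5.prems" by auto
    then show ?thesis
      using False loop by simp
  qed
qed auto

theorem mainTheorem2:
  fixes \<alpha> :: game and \<phi> :: fml and S :: "label \<Rightarrow> fml" and b :: label and \<omega> :: state
  assumes "distinct (labels \<alpha>)"
    and "End \<notin> nodes \<alpha>"
    and "Fresh \<notin> nodes \<alpha>"
    and "subval S \<alpha>"
    and "valid (Imp (S End) \<phi>)"
    and "b \<in> nodes \<alpha>"
    and "\<omega> \<in> fsem (S (lab \<alpha>))"
  shows "\<omega> \<in> fsem (Dia (prefix b (projU \<alpha> S)) (Dia (suffix b (projP \<alpha> S)) \<phi>))"
proof -
  note subval = assms(4) and End_notin = assms(2) and b_node = assms(6)
  have b_not_Fresh: "b \<noteq> Fresh"
    using assms(3) b_node by auto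
  have "fsem (S (lab \<alpha>)) \<subseteq> win (prefix b (projU \<alpha> S)) (fsem (S b))"
    using subval End_notin b_node b_not_Fresh by (rule subval_win_prefix_projU)
  also have "\<dots> \<subseteq> win (prefix b (projU \<alpha> S)) (win (suffix b (projP \<alpha> S)) (fsem (S End)))"
    using subval End_notin b_node b_not_Fresh by (intro win_mono subval_win_suffix_projP)
  also have "\<dots> \<subseteq> win (prefix b (projU \<alpha> S)) (win (suffix b (projP \<alpha> S)) (fsem \<phi>))"
    using assms(5) by (intro win_mono) simp
  finally show ?thesis
    using assms(7) by auto
qed

end
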